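(* Let $L_1,L_2,L_3$ be pairwise commuting generators of semigroups of completely positive unital maps on $M_d$, let $x_1,x_2,x_3\ge0$ with $x_1+x_2+x_3=1$, and let $A_t=\sum_{j=1}^3x_je^{tL_j}$. Then $A_t$ solves $\frac{dA_t}{dt}=\int_0^t ds\,L_{t-s}A_s$, $A_0=I$, with memory kernel whose Laplace transform is $$\widehat L_p=L+\widehat B_p\,\widehat C_p^{-1},$$ where $L=x_1L_1+x_2L_2+x_3L_3$, $\widehat B_p=p\,(x_1L_1^2+x_2L_2^2+x_3L_3^2-L^2)+L_1L_2L_3-L(x_1L_2L_3+x_2L_1L_3+x_3L_1L_2)$, $\widehat C_p=p^2I-p(L_1+L_2+L_3-L)+x_1L_2L_3+x_2L_1L_3+x_3L_1L_2$ (for $p$ large enough that $\widehat C_p$ is invertible).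
   Context: $M_d$ denotes the algebra of complex $d\times d$ matrices; $I$ is the identity map on $M_d$. For a $\mathcal B(M_d)$-valued function $X_t$, $\widehat X_p=\int_0^\infty dt\,e^{-pt}X_t$ is its Laplace transform; the master equation means $\widehat A_p=(pI-\widehat L_p)^{-1}$. *)

theory Defs
  imports "HOL-Analysis.Analysis"
begin

text \<open>Elements of M_d are complex d x d matrices (type complex^'d^'d); linear maps on
  M_d are bounded (real-)linear operators, required additionally to be complex-linear.\<close>

type_synonym 'd sop = "(complex^'d^'d) \<Rightarrow>\<^sub>L (complex^'d^'d)"

definition cscale :: "complex \<Rightarrow> complex^'d^'d \<Rightarrow> complex^'d^'d" where
  "cscale c X = (\<chi> i j. c * X $ i $ j)"

definition complex_linear_op :: "'d::finite sop \<Rightarrow> bool" where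
  "complex_linear_op T \<longleftrightarrow>
     (\<forall>c X. blinfun_apply T (cscale c X) = cscale c (blinfun_apply T X))"

primrec op_pow :: "'d::finite sop \<Rightarrow> nat \<Rightarrow> 'd sop" where
  "op_pow T 0 = id_blinfun"
| "op_pow T (Suc n) = T o\<^sub>L op_pow T n"

definition op_exp :: "'d::finite sop \<Rightarrow> 'd sop" where
  "op_exp T = (\<Sum>n. (1 / fact n) *\<^sub>R op_pow T n)"

definition op_invertible :: "'d::finite sop \<Rightarrow> bool" where
  "op_invertible T \<longleftrightarrow> (\<exists>S. T o\<^sub>L S = id_blinfun \<and> S o\<^sub>L T = id_blinfun)"

definition op_inv :: "'d::finite sop \<Rightarrow> 'd sop" where
  "op_inv T = (SOME S. T o\<^sub>L S = id_blinfun \<and> S o\<^sub>L T = id_blinfun)"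

text \<open>Positivity of an n x n block matrix with blocks in M_d (i.e. an element of
  M_n(M_d) = M_{nd}): its quadratic form is real and nonnegative.\<close>
definition psd_block :: "nat \<Rightarrow> (nat \<Rightarrow> nat \<Rightarrow> complex^'d::finite^'d) \<Rightarrow> bool" where
  "psd_block n X \<longleftrightarrow>
     (\<forall>v :: nat \<Rightarrow> complex^'d.
        let s = (\<Sum>a<n. \<Sum>b<n. \<Sum>i\<in>UNIV. cnj (v a $ i) * ((X a b *v v b) $ i))
        in Im s = 0 \<and> Re s \<ge> 0)"

text \<open>Complete positivity: id_n \<otimes> T is positive on M_n(M_d) for every n.\<close>
definition completely_positive :: "'d::finite sop \<Rightarrow> bool" where
  "completely_positive T \<longleftrightarrow>
     (\<forall>n X. psd_block n X \<longrightarrow> psd_block n (\<lambda>a b. blinfun_apply T (X a b)))"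

definition unital :: "'d::finite sop \<Rightarrow> bool" where
  "unital T \<longleftrightarrow> blinfun_apply T (mat 1) = mat 1"

definition cpu_generator :: "'d::finite sop \<Rightarrow> bool" where
  "cpu_generator L \<longleftrightarrow> complex_linear_op L \<and>
     (\<forall>t\<ge>0. completely_positive (op_exp (t *\<^sub>R L)) \<and> unital (op_exp (t *\<^sub>R L)))"

end

theory Submission
  imports Defs "HOL-Real_Asymp.Real_Asymp"
begin

(* Write R_j(p) = (p - L_j)^{-1} for the resolvents of the three generators.
   The Laplace transform of A_t is the mixture of resolvents x1 R_1 + x2 R_2 + x3 R_3, and
   the theorem amounts to the purely algebraic fact that this mixture is the inverse of
   p - L - B_p C_p^{-1}.  Indeed, for commuting L_j one has
     C_p = x1 q2 q3 + x2 q1 q3 + x3 q1 q2   and   (p - L) C_p - B_p = q1 q2 q3,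
   where q_j = p - L_j, so p - L - B_p C_p^{-1} = q1 q2 q3 C_p^{-1}, whose inverse is
   C_p (q1 q2 q3)^{-1} = x1 R_1 + x2 R_2 + x3 R_3. *)

section \<open>Bounded endomorphisms as a Banach algebra\<close>

text \<open>The library puts no algebra structure on blinfun, so we introduce a copy
  of the type that carries one.\<close>

typedef (overloaded) 'a endo = "UNIV :: ('a::euclidean_space \<Rightarrow>\<^sub>L 'a) set"
  morphisms fromE toE by auto

setup_lifting type_definition_endo

instantiation endo :: (euclidean_space) real_normed_algebra_1
begin
lift_definition zero_endo :: "'a endo" is 0 .
lift_definition one_endo :: "'a endo" is id_blinfun .
lift_definition plus_endo :: "'a endo \<Rightarrow> 'a endo \<Rightarrow> 'a endo" is "(+)" .
lift_definition minus_endo :: "'a endo \<Rightarrow> 'a endo \<Rightarrow> 'a endo" is "(-)" .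
lift_definition uminus_endo :: "'a endo \<Rightarrow> 'a endo" is "uminus" .
lift_definition times_endo :: "'a endo \<Rightarrow> 'a endo \<Rightarrow> 'a endo" is "(o\<^sub>L)" .
lift_definition scaleR_endo :: "real \<Rightarrow> 'a endo \<Rightarrow> 'a endo" is "scaleR" .
lift_definition norm_endo :: "'a endo \<Rightarrow> real" is norm .
definition dist_endo :: "'a endo \<Rightarrow> 'a endo \<Rightarrow> real"
  where "dist_endo a b = norm (a - b)"
definition [code del]:
  "(uniformity :: ('a endo \<times> 'a endo) filter) = (INF e\<in>{0 <..}. principal {(x, y). dist x y < e})"
definition open_endo :: "'a endo set \<Rightarrow> bool"
  where [code del]: "open_endo S = (\<forall>x\<in>S. \<forall>\<^sub>F (x', y) in uniformity. x' = x \<longrightarrow> y \<in> S)"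
definition sgn_endo :: "'a endo \<Rightarrow> 'a endo"
  where "sgn_endo x = scaleR (inverse (norm x)) x"
instance
proof
  fix a b c :: "'a endo" and r s :: real
  show "a + b + c = a + (b + c)" by transfer simp
  show "a + b = b + a" by transfer simp
  show "0 + a = a" by transfer simp
  show "- a + a = 0" by transfer simp
  show "a - b = a + - b" by transfer simp
  show "r *\<^sub>R (a + b) = r *\<^sub>R a + r *\<^sub>R b" by transfer (simp add: scaleR_add_right)
  show "(r + s) *\<^sub>R a = r *\<^sub>R a + s *\<^sub>R a" by transfer (simp add: scaleR_add_left)
  show "r *\<^sub>R s *\<^sub>R a = (r * s) *\<^sub>R a" by transfer simp
  show "1 *\<^sub>R a = a" by transfer simp
  show "a * b * c = a * (b * c)" by transfer (auto intro!: blinfun_eqI)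
  show "(a + b) * c = a * c + b * c"
    by transfer (auto intro!: blinfun_eqI simp: blinfun.bilinear_simps)
  show "a * (b + c) = a * b + a * c"
    by transfer (auto intro!: blinfun_eqI simp: blinfun.bilinear_simps)
  show "1 * a = a" by transfer (auto intro!: blinfun_eqI)
  show "a * 1 = a" by transfer (auto intro!: blinfun_eqI)
  show "r *\<^sub>R a * b = r *\<^sub>R (a * b)"
    by transfer (auto intro!: blinfun_eqI simp: blinfun.bilinear_simps)
  show "a * r *\<^sub>R b = r *\<^sub>R (a * b)"
    by transfer (auto intro!: blinfun_eqI simp: blinfun.bilinear_simps)
  show "(norm a = 0) = (a = 0)" by transfer simp
  show "norm (a + b) \<le> norm a + norm b" by transfer (rule norm_triangle_ineq)
  show "norm (r *\<^sub>R a) = \<bar>r\<bar> * norm a" by transfer simp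
  show "norm (a * b) \<le> norm a * norm b" by transfer (rule norm_blinfun_compose)
  show "norm (1::'a endo) = 1" by transfer simp
  show "(0::'a endo) \<noteq> 1"
    by transfer (metis norm_blinfun_id norm_zero zero_neq_one)
qed (simp_all add: dist_endo_def open_endo_def sgn_endo_def uniformity_endo_def)
end

lemma fromE_add: "fromE (a + b) = fromE a + fromE b" by transfer simp
lemma fromE_diff: "fromE (a - b) = fromE a - fromE b" by transfer simp
lemma fromE_scaleR: "fromE (r *\<^sub>R a) = r *\<^sub>R fromE a" by transfer simp
lemma fromE_mult: "fromE (a * b) = fromE a o\<^sub>L fromE b" by transfer simp
lemma fromE_one: "fromE 1 = id_blinfun" by transfer simp
lemma norm_fromE: "norm (fromE a) = norm a" by transfer simp
lemma fromE_toE [simp]: "fromE (toE x) = x" by (simp add: toE_inverse)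
lemma toE_fromE [simp]: "toE (fromE a) = a" by (rule fromE_inverse)
lemma fromE_inj: "fromE a = fromE b \<longleftrightarrow> a = b" by (metis toE_fromE)

lemmas fromE_hom = fromE_add fromE_diff fromE_scaleR fromE_mult fromE_one

lemma bounded_linear_fromE: "bounded_linear fromE"
  by (rule bounded_linear_intro[where K=1]) (auto simp: fromE_add fromE_scaleR norm_fromE)

lemma dist_fromE: "dist (fromE a) (fromE b) = dist a b"
  by (simp add: dist_norm fromE_diff[symmetric] norm_fromE)

lemma tendsto_fromE_iff: "((\<lambda>n. fromE (f n)) \<longlongrightarrow> fromE l) F \<longleftrightarrow> (f \<longlongrightarrow> l) F"
  by (simp add: tendsto_iff dist_fromE)

instance endo :: (euclidean_space) banach
proof
  fix X :: "nat \<Rightarrow> 'a endo"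
  assume "Cauchy X"
  then have "Cauchy (\<lambda>n. fromE (X n))" by (simp add: Cauchy_def dist_fromE)
  then obtain l where "(\<lambda>n. fromE (X n)) \<longlonglongrightarrow> l"
    using Cauchy_convergent_iff convergent_def by blast
  then have "(\<lambda>n. fromE (X n)) \<longlonglongrightarrow> fromE (toE l)" by simp
  then have "X \<longlonglongrightarrow> toE l" by (simp only: tendsto_fromE_iff)
  then show "convergent X" by (auto simp: convergent_def)
qed

lemma op_pow_eq: "op_pow T n = fromE (toE T ^ n)"
  by (induction n) (simp_all add: fromE_one fromE_mult)

lemma op_exp_eq: "op_exp T = fromE (exp (toE T))"
proof -
  have "op_exp T = (\<Sum>n. fromE (toE T ^ n /\<^sub>R fact n))"
    unfolding op_exp_def op_pow_eq by (simp add: fromE_scaleR divide_inverse_commute)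
  also have "\<dots> = fromE (\<Sum>n. toE T ^ n /\<^sub>R fact n)"
    by (rule bounded_linear.suminf[OF bounded_linear_fromE summable_exp_generic, symmetric])
  finally show ?thesis by (simp add: exp_def)
qed

lemma op_invertible_fromE: "x * y = 1 \<Longrightarrow> y * x = 1 \<Longrightarrow> op_invertible (fromE x)"
  unfolding op_invertible_def by (metis fromE_mult fromE_one)

lemma op_inv_fromE:
  assumes xy: "x * y = 1" and yx: "y * x = 1"
  shows "op_inv (fromE x) = fromE y"
proof -
  have "\<exists>S. fromE x o\<^sub>L S = id_blinfun \<and> S o\<^sub>L fromE x = id_blinfun"
    using assms by (metis fromE_mult fromE_one)
  then have "op_inv (fromE x) o\<^sub>L fromE x = id_blinfun"
    unfolding op_inv_def by (rule someI2_ex) blast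
  then have sx: "toE (op_inv (fromE x)) * x = 1"
    by (simp add: fromE_inj[symmetric] fromE_mult fromE_one)
  have "toE (op_inv (fromE x)) = toE (op_inv (fromE x)) * (x * y)" using xy by simp
  also have "\<dots> = y" using sx by (simp flip: mult.assoc)
  finally show ?thesis by (metis fromE_toE)
qed

section \<open>Improper integrals of dominated operator-valued functions\<close>

definition elem_op :: "'b::euclidean_space \<Rightarrow> 'a::euclidean_space \<Rightarrow> 'a \<Rightarrow>\<^sub>L 'b" where
  "elem_op i j = blinfun_of_matrix (\<lambda>i' j'. if i' = i \<and> j' = j then 1 else 0)"

lemma elem_op_apply:
  assumes "i \<in> Basis" "j \<in> Basis"
  shows "elem_op i j x = (x \<bullet> j) *\<^sub>R i"
proof -
  have "(\<Sum>j'\<in>Basis. (x \<bullet> j' * (if i' = i \<and> j' = j then 1 else 0)) *\<^sub>R i')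
        = (if i' = i then (x \<bullet> j) *\<^sub>R i else 0)" for i'
    using assms by (auto simp: if_distrib[of "\<lambda>c. (_ * c) *\<^sub>R _"] sum.delta' cong: if_cong)
  then show ?thesis
    using assms by (simp add: elem_op_def blinfun_of_matrix_apply sum.delta')
qed

lemma blinfun_matrix_decomp:
  fixes f :: "'a::euclidean_space \<Rightarrow>\<^sub>L 'b::euclidean_space"
  shows "f = (\<Sum>i\<in>Basis. \<Sum>j\<in>Basis. (f j \<bullet> i) *\<^sub>R elem_op i j)"
proof -
  have "f = blinfun_of_matrix (\<lambda>i j. f j \<bullet> i)" by (simp add: blinfun_of_matrix_works)
  also have "\<dots> = (\<Sum>i\<in>Basis. \<Sum>j\<in>Basis. (f j \<bullet> i) *\<^sub>R elem_op i j)"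
    by (rule blinfun_eqI) (simp add: blinfun_of_matrix_apply blinfun.sum_left
        blinfun.scaleR_left elem_op_apply algebra_simps cong: sum.cong)
  finally show ?thesis .
qed

lemma blinfun_of_matrix_entry:
  fixes a :: "'b::euclidean_space \<Rightarrow> 'a::euclidean_space \<Rightarrow> real"
  assumes "i \<in> Basis" "j \<in> Basis"
  shows "blinfun_of_matrix a j \<bullet> i = a i j"
proof -
  have "(\<Sum>j'\<in>Basis. if i' = i then (if j = j' then 1 else 0) * a i j' else 0)
        = (if i' = i then a i j else 0)" for i'
    using assms by (simp add: if_distrib[of "\<lambda>c. c * _"] sum.delta cong: if_cong)
  then show ?thesis
    using assms by (simp add: blinfun_of_matrix_apply inner_sum_left inner_Basis
        if_distrib[of "\<lambda>c. _ * c"] sum.delta' cong: if_cong)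
qed

lemma has_integral_blinfun_entrywise:
  fixes F :: "real \<Rightarrow> 'a::euclidean_space \<Rightarrow>\<^sub>L 'b::euclidean_space" and R :: "'a \<Rightarrow>\<^sub>L 'b"
  assumes "\<And>i j. i \<in> Basis \<Longrightarrow> j \<in> Basis \<Longrightarrow> ((\<lambda>t. F t j \<bullet> i) has_integral (R j \<bullet> i)) S"
  shows "(F has_integral R) S"
proof -
  have "((\<lambda>t. \<Sum>i\<in>Basis. \<Sum>j\<in>Basis. (F t j \<bullet> i) *\<^sub>R elem_op i j) has_integral
         (\<Sum>i\<in>Basis. \<Sum>j\<in>Basis. (R j \<bullet> i) *\<^sub>R elem_op i j)) S"
    by (intro has_integral_sum finite_Basis has_integral_scaleR_left assms)
  then show ?thesis by (simp flip: blinfun_matrix_decomp)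
qed

text \<open>A continuous operator-valued function on [0,\<infinity>) dominated by an integrable function
  is integrable there, and its integral is the limit of the integrals over [0,n].  This is
  dominated convergence applied to each matrix entry.\<close>

lemma has_integral_halfline_dominated:
  fixes F :: "real \<Rightarrow> 'a::euclidean_space \<Rightarrow>\<^sub>L 'b::euclidean_space"
  assumes cont: "continuous_on {0..} F"
    and h: "h integrable_on {0..}"
    and bound: "\<And>t. t \<ge> 0 \<Longrightarrow> norm (F t) \<le> h t"
  shows "\<exists>R. (F has_integral R) {0..} \<and> (\<lambda>n. integral {0..real n} F) \<longlonglongrightarrow> R"
proof -
  define a where "a i j = integral {0..} (\<lambda>t. F t j \<bullet> i)" for i j
  have entry: "((\<lambda>t. F t j \<bullet> i) has_integral a i j) {0..}
       \<and> (\<lambda>n. integral {0..real n} F j \<bullet> i) \<longlonglongrightarrow> a i j"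
    if ij: "i \<in> Basis" "j \<in> Basis" for i j
  proof -
    define g where "g t = F t j \<bullet> i" for t
    define f where "f n t = (if t \<in> {0..real n} then g t else 0)" for n :: nat and t
    have entry_linear: "bounded_linear (\<lambda>T :: 'a \<Rightarrow>\<^sub>L 'b. T j \<bullet> i)"
      by (intro bounded_linear_inner_left_comp blinfun.bounded_linear_left)
    have F_int: "(F has_integral integral {0..b} F) {0..b}" for b
      using cont by (intro integrable_integral integrable_continuous_interval)
        (auto elim: continuous_on_subset)
    have "(g has_integral (integral {0..b} F j \<bullet> i)) {0..b}" for b
      using has_integral_linear[OF F_int entry_linear] unfolding g_def o_def .
    then have f_int: "(f n has_integral (integral {0..real n} F j \<bullet> i)) {0..}" for n
      unfolding f_def by (subst has_integral_restrict) auto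
    have g_bound: "norm (g t) \<le> h t" if "t \<ge> 0" for t
    proof -
      have "norm (g t) \<le> norm (F t j) * norm i"
        unfolding g_def real_norm_def by (rule Cauchy_Schwarz_ineq2)
      also have "\<dots> \<le> norm (F t) * norm j * norm i"
        by (intro mult_right_mono norm_blinfun) auto
      also have "\<dots> \<le> h t" using ij bound that by simp
      finally show ?thesis .
    qed
    have f_lim: "(\<lambda>n. f n t) \<longlonglongrightarrow> g t" if "t \<in> {0..}" for t
    proof -
      have "eventually (\<lambda>n. f n t = g t) sequentially"
        using that by (intro eventually_sequentiallyI[of "nat \<lceil>t\<rceil>"])
          (auto simp: f_def nat_ceiling_le_eq)
      then show ?thesis by (rule tendsto_eventually)
    qed
    have f_bound: "norm (f n t) \<le> h t" if "t \<in> {0..}" for n t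
      using g_bound[of t] that norm_ge_zero[of "g t"] by (auto simp: f_def)
    note dc = dominated_convergence[of f "{0..}" h g, OF _ h f_bound f_lim]
    have "integral {0..} (f n) = integral {0..real n} F j \<bullet> i" for n
      using f_int by (rule integral_unique)
    then show ?thesis
      using dc f_int unfolding a_def g_def[symmetric] by (auto intro: integrable_integral)
  qed
  define R where "R = blinfun_of_matrix a"
  have R_entry: "R j \<bullet> i = a i j" if "i \<in> Basis" "j \<in> Basis" for i j
    unfolding R_def using that by (rule blinfun_of_matrix_entry)
  have "(F has_integral R) {0..}"
    by (rule has_integral_blinfun_entrywise) (use entry R_entry in auto)
  moreover have "(\<lambda>n. integral {0..real n} F) \<longlonglongrightarrow> R"
    by (rule tendsto_componentwise) (use entry R_entry in auto)
  ultimately show ?thesis by blast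
qed

section \<open>The Laplace transform of an operator semigroup\<close>

lemma exp_shift:
  fixes k :: "'a::{real_normed_algebra_1,banach}"
  shows "exp (t *\<^sub>R (k - p *\<^sub>R 1)) = exp (- p * t) *\<^sub>R exp (t *\<^sub>R k)"
proof -
  have "t *\<^sub>R (k - p *\<^sub>R 1) = t *\<^sub>R k + of_real (- p * t)"
    by (simp add: scaleR_diff_right of_real_def algebra_simps)
  moreover have "(t *\<^sub>R k) * of_real (- p * t) = of_real (- p * t) * (t *\<^sub>R k)"
    by (simp add: of_real_def)
  ultimately have "exp (t *\<^sub>R (k - p *\<^sub>R 1)) = exp (t *\<^sub>R k) * exp (of_real (- p * t))"
    by (simp only: exp_add_commuting)
  also have "\<dots> = exp (- p * t) *\<^sub>R exp (t *\<^sub>R k)"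
    by (subst exp_of_real) (simp add: of_real_def)
  finally show ?thesis .
qed

lemma norm_exp_shift_le:
  fixes k :: "'a::{real_normed_algebra_1,banach}"
  assumes "t \<ge> 0"
  shows "norm (exp (t *\<^sub>R (k - p *\<^sub>R 1))) \<le> exp (- (p - norm k) * t)"
proof -
  have "norm (exp (t *\<^sub>R (k - p *\<^sub>R 1))) = exp (- p * t) * norm (exp (t *\<^sub>R k))"
    by (simp add: exp_shift)
  also have "\<dots> \<le> exp (- p * t) * exp (norm (t *\<^sub>R k))"
    by (intro mult_left_mono norm_exp) auto
  also have "\<dots> = exp (- (p - norm k) * t)"
    using assms by (simp add: algebra_simps flip: exp_add)
  finally show ?thesis .
qed

lemma continuous_on_exp_scaleR:
  fixes M :: "'a::{real_normed_algebra_1,banach}"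
  shows "continuous_on X (\<lambda>t. exp (t *\<^sub>R M))"
  by (rule continuous_on_vector_derivative) (rule exp_scaleR_has_vector_derivative_right)

lemma integral_exp_scaleR:
  fixes M :: "'a::{real_normed_algebra_1,banach}"
  assumes "b \<ge> 0"
  shows "M * integral {0..b} (\<lambda>t. exp (t *\<^sub>R M)) = exp (b *\<^sub>R M) - 1"
    and "integral {0..b} (\<lambda>t. exp (t *\<^sub>R M)) * M = exp (b *\<^sub>R M) - 1"
proof -
  let ?e = "\<lambda>t. exp (t *\<^sub>R M)"
  have deriv_left: "(?e has_vector_derivative M * ?e t) (at t within X)" for t X
    by (rule has_vector_derivative_at_within[OF exp_scaleR_has_vector_derivative_left])
  have e_int: "(?e has_integral integral {0..b} ?e) {0..b}"
    by (intro integrable_integral integrable_continuous_interval continuous_on_exp_scaleR)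
  have "((\<lambda>t. M * ?e t) has_integral (?e b - ?e 0)) {0..b}"
    using assms by (intro fundamental_theorem_of_calculus deriv_left)
  moreover have "((\<lambda>t. M * ?e t) has_integral M * integral {0..b} ?e) {0..b}"
    by (rule has_integral_mult_right[OF e_int])
  ultimately show "M * integral {0..b} ?e = ?e b - 1"
    by (simp add: has_integral_unique)
  have "((\<lambda>t. ?e t * M) has_integral (?e b - ?e 0)) {0..b}"
    using assms by (intro fundamental_theorem_of_calculus exp_scaleR_has_vector_derivative_right)
  moreover have "((\<lambda>t. ?e t * M) has_integral integral {0..b} ?e * M) {0..b}"
    by (rule has_integral_mult_left[OF e_int])
  ultimately show "integral {0..b} ?e * M = ?e b - 1"
    by (simp add: has_integral_unique)
qed

text \<open>The Laplace transform of t \<mapsto> e^{tK} at p > \<parallel>K\<parallel> is the resolvent (p - K)^{-1}: the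
  damped semigroup is integrable on [0,\<infinity>) by domination, and letting b \<rightarrow> \<infinity> in the
  finite-horizon identities shows that its integral is a two-sided inverse of p - K.\<close>

lemma laplace_transform_exp:
  fixes k :: "'a::euclidean_space endo"
  assumes p: "p > norm k"
  shows "\<exists>R. ((\<lambda>t. exp (- p * t) *\<^sub>R fromE (exp (t *\<^sub>R k))) has_integral fromE R) {0..}
           \<and> (p *\<^sub>R 1 - k) * R = 1 \<and> R * (p *\<^sub>R 1 - k) = 1"
proof -
  define M where "M = k - p *\<^sub>R 1"
  define e where "e = (\<lambda>t. exp (t *\<^sub>R M))"
  define G where "G b = integral {0..b} e" for b
  have e_bound: "norm (fromE (e t)) \<le> exp (- (p - norm k) * t)" if "t \<ge> 0" for t
    using norm_exp_shift_le[OF that] by (simp add: e_def M_def norm_fromE)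
  have "continuous_on {0..} e"
    unfolding e_def by (rule continuous_on_exp_scaleR)
  then have "continuous_on {0..} (\<lambda>t. fromE (e t))"
    by (intro continuous_on_compose2[OF linear_continuous_on[OF bounded_linear_fromE]]) auto
  moreover have "(\<lambda>t. exp (- (p - norm k) * t)) integrable_on {0..}"
    using p by (intro integrable_on_exp_minus_to_infinity) simp
  ultimately obtain Rs where Rs: "((\<lambda>t. fromE (e t)) has_integral Rs) {0..}"
      and lim_int: "(\<lambda>n. integral {0..real n} (\<lambda>t. fromE (e t))) \<longlonglongrightarrow> Rs"
    using has_integral_halfline_dominated e_bound by blast
  define R where "R = toE Rs"
  have "integral {0..b} (\<lambda>t. fromE (e t)) = fromE (G b)" for b
    using integral_linear[OF _ bounded_linear_fromE, of e "{0..b}"]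
    by (simp add: G_def e_def o_def integrable_continuous_interval continuous_on_exp_scaleR)
  with lim_int have G_lim: "(\<lambda>n. G (real n)) \<longlonglongrightarrow> R"
    by (simp add: R_def flip: tendsto_fromE_iff)
  have e_lim: "(\<lambda>n. e (real n)) \<longlonglongrightarrow> 0"
  proof (rule Lim_null_comparison)
    show "\<forall>\<^sub>F n in sequentially. norm (e (real n)) \<le> exp (- (p - norm k) * real n)"
      using e_bound by (auto simp: norm_fromE)
    show "(\<lambda>n. exp (- (p - norm k) * real n)) \<longlonglongrightarrow> 0"
      using p by real_asymp
  qed
  have "(\<lambda>n. M * G (real n)) \<longlonglongrightarrow> M * R"
    by (intro tendsto_intros G_lim)
  moreover have "(\<lambda>n. M * G (real n)) \<longlonglongrightarrow> 0 - 1"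
    using tendsto_diff[OF e_lim tendsto_const[of 1]]
    by (simp add: G_def e_def integral_exp_scaleR)
  ultimately have MR: "M * R = - 1" using LIMSEQ_unique by fastforce
  have "(\<lambda>n. G (real n) * M) \<longlonglongrightarrow> R * M"
    by (intro tendsto_intros G_lim)
  moreover have "(\<lambda>n. G (real n) * M) \<longlonglongrightarrow> 0 - 1"
    using tendsto_diff[OF e_lim tendsto_const[of 1]]
    by (simp add: G_def e_def integral_exp_scaleR)
  ultimately have RM: "R * M = - 1" using LIMSEQ_unique by fastforce
  have "(\<lambda>t. fromE (e t)) = (\<lambda>t. exp (- p * t) *\<^sub>R fromE (exp (t *\<^sub>R k)))"
    by (simp add: e_def M_def exp_shift fromE_scaleR)
  moreover have "p *\<^sub>R 1 - k = - M" and "fromE R = Rs"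
    by (simp_all add: M_def R_def)
  ultimately show ?thesis
    using Rs MR RM by (intro exI[of _ R]) auto
qed

section \<open>Invertibility of the denominator for large p\<close>

lemma neumann_series_inverse:
  fixes X :: "'a::{real_normed_algebra_1,banach}"
  assumes X: "norm X < 1"
  shows "\<exists>Y. (1 - X) * Y = 1 \<and> Y * (1 - X) = 1"
proof -
  have "summable (\<lambda>n. norm X ^ n)"
    using X by (intro summable_geometric) simp
  then have "summable (\<lambda>n. X ^ n)"
    by (rule summable_comparison_test[rotated]) (auto intro: norm_power_ineq)
  then obtain Y where "(\<lambda>n. \<Sum>i<n. X ^ i) \<longlonglongrightarrow> Y"
    unfolding summable_def sums_def by blast
  note partial_sums = tendsto_mult[OF tendsto_const this] tendsto_mult[OF this tendsto_const]
  have telescope: "(1 - X) * (\<Sum>i<n. X ^ i) = 1 - X ^ n" "(\<Sum>i<n. X ^ i) * (1 - X) = 1 - X ^ n"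
    for n
  proof -
    have "(\<Sum>i<n. X ^ i) - X * (\<Sum>i<n. X ^ i) = (\<Sum>i<n. X ^ i - X ^ Suc i)"
      by (simp add: sum_distrib_left sum_subtractf)
    also have "\<dots> = 1 - X ^ n"
      by (simp only: sum_lessThan_telescope' power_0)
    finally have "(\<Sum>i<n. X ^ i) - X * (\<Sum>i<n. X ^ i) = 1 - X ^ n" .
    moreover have "X * (\<Sum>i<n. X ^ i) = (\<Sum>i<n. X ^ i) * X"
      by (simp add: sum_distrib_left sum_distrib_right power_commutes)
    ultimately show "(1 - X) * (\<Sum>i<n. X ^ i) = 1 - X ^ n" "(\<Sum>i<n. X ^ i) * (1 - X) = 1 - X ^ n"
      by (simp_all add: algebra_simps)
  qed
  have "(\<lambda>n. X ^ n) \<longlonglongrightarrow> 0"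
  proof (rule Lim_null_comparison)
    show "\<forall>\<^sub>F n in sequentially. norm (X ^ n) \<le> norm X ^ n"
      by (intro always_eventually allI norm_power_ineq)
    show "(\<lambda>n. norm X ^ n) \<longlonglongrightarrow> 0"
      using X by (intro LIMSEQ_power_zero) auto
  qed
  then have "(\<lambda>n. 1 - X ^ n) \<longlonglongrightarrow> 1"
    using tendsto_diff[OF tendsto_const[of 1]] by fastforce
  then show ?thesis
    using partial_sums[of "1 - X"] unfolding telescope by (metis LIMSEQ_unique)
qed

text \<open>The quadratic p^2 - pW + E is invertible once p > 1 and p > \<parallel>W\<parallel> + \<parallel>E\<parallel>, since it
  equals p^2 (1 - X) with \<parallel>X\<parallel> < 1.\<close>

lemma quadratic_pencil_invertible:
  fixes W E :: "'a::{real_normed_algebra_1,banach}"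
  assumes p: "p > 1" "p > norm W + norm E"
  shows "\<exists>Ci. (p^2 *\<^sub>R 1 - p *\<^sub>R W + E) * Ci = 1 \<and> Ci * (p^2 *\<^sub>R 1 - p *\<^sub>R W + E) = 1"
proof -
  define X where "X = (1/p) *\<^sub>R W - (1/p^2) *\<^sub>R E"
  have "norm X \<le> norm W / p + norm E / p^2"
    using p norm_triangle_ineq4[of "(1/p) *\<^sub>R W" "(1/p^2) *\<^sub>R E"] by (simp add: X_def)
  also have "\<dots> \<le> (norm W + norm E) / p"
    using p by (simp add: add_divide_distrib divide_left_mono power2_eq_square)
  also have "\<dots> < 1" using p by simp
  finally obtain Y where Y: "(1 - X) * Y = 1" "Y * (1 - X) = 1"
    using neumann_series_inverse by blast
  have "p^2 *\<^sub>R 1 - p *\<^sub>R W + E = p^2 *\<^sub>R (1 - X)"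
    using p by (simp add: X_def scaleR_diff_right power2_eq_square)
  then show ?thesis
    using p Y by (intro exI[of _ "(1/p^2) *\<^sub>R Y"]) simp
qed

section \<open>The resolvent identity behind the memory kernel\<close>

lemma commute_inverse:
  fixes a b r :: "'a::monoid_mult"
  assumes ab: "a * b = b * a" and br: "b * r = 1" and rb: "r * b = 1"
  shows "a * r = r * a"
proof -
  have "a * r = (r * b) * a * r" using rb by simp
  also have "\<dots> = r * (a * b) * r" by (simp add: ab mult.assoc)
  also have "\<dots> = r * a" using br by (simp add: mult.assoc)
  finally show ?thesis .
qed

lemma denominator_factorisation:
  fixes l1 l2 l3 :: "'a::real_algebra_1"
  assumes x: "x1 + x2 + x3 = 1"
  shows "p^2 *\<^sub>R 1 - p *\<^sub>R (l1 + l2 + l3 - (x1 *\<^sub>R l1 + x2 *\<^sub>R l2 + x3 *\<^sub>R l3))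
           + (x1 *\<^sub>R (l2 * l3) + x2 *\<^sub>R (l1 * l3) + x3 *\<^sub>R (l1 * l2))
    = x1 *\<^sub>R ((p *\<^sub>R 1 - l2) * (p *\<^sub>R 1 - l3)) + x2 *\<^sub>R ((p *\<^sub>R 1 - l1) * (p *\<^sub>R 1 - l3))
      + x3 *\<^sub>R ((p *\<^sub>R 1 - l1) * (p *\<^sub>R 1 - l2))"
proof -
  have x3: "x3 = 1 - x1 - x2" using x by simp
  show ?thesis
    unfolding x3 by (simp add: algebra_simps power2_eq_square scaleR_add_right scaleR_diff_right
        scaleR_add_left scaleR_diff_left)
qed

lemma numerator_identity:
  fixes l1 l2 l3 :: "'a::real_algebra_1"
  assumes c: "l1 * l2 = l2 * l1" "l1 * l3 = l3 * l1" "l2 * l3 = l3 * l2"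
    and x: "x1 + x2 + x3 = 1"
  defines "lL \<equiv> x1 *\<^sub>R l1 + x2 *\<^sub>R l2 + x3 *\<^sub>R l3"
    and "eE \<equiv> x1 *\<^sub>R (l2 * l3) + x2 *\<^sub>R (l1 * l3) + x3 *\<^sub>R (l1 * l2)"
  shows "(p *\<^sub>R 1 - lL) * (p^2 *\<^sub>R 1 - p *\<^sub>R (l1 + l2 + l3 - lL) + eE)
           - (p *\<^sub>R (x1 *\<^sub>R (l1 * l1) + x2 *\<^sub>R (l2 * l2) + x3 *\<^sub>R (l3 * l3) - lL * lL)
              + l1 * l2 * l3 - lL * eE)
         = (p *\<^sub>R 1 - l1) * (p *\<^sub>R 1 - l2) * (p *\<^sub>R 1 - l3)"
proof -
  have c': "l2 * (l1 * z) = l1 * (l2 * z)" "l3 * (l1 * z) = l1 * (l3 * z)"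
    "l3 * (l2 * z) = l2 * (l3 * z)" for z
    using c by (metis mult.assoc)+
  have x3: "x3 = 1 - x1 - x2" using x by simp
  show ?thesis
    unfolding lL_def eE_def x3
    by (simp add: algebra_simps c c' power2_eq_square scaleR_add_right scaleR_diff_right
        scaleR_add_left scaleR_diff_left)
qed

text \<open>Indeed p - (L + B C^{-1}) = q1 q2 q3 C^{-1}
  by the numerator identity, while the mixture times q1 q2 q3 is C.\<close>

lemma mixture_of_resolvents_inverse:
  fixes l1 l2 l3 lL eE R1 R2 R3 Ci :: "'a::real_algebra_1"
  assumes c: "l1 * l2 = l2 * l1" "l1 * l3 = l3 * l1" "l2 * l3 = l3 * l2"
    and x: "x1 + x2 + x3 = 1"
    and R1: "(p *\<^sub>R 1 - l1) * R1 = 1" "R1 * (p *\<^sub>R 1 - l1) = 1"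
    and R2: "(p *\<^sub>R 1 - l2) * R2 = 1" "R2 * (p *\<^sub>R 1 - l2) = 1"
    and R3: "(p *\<^sub>R 1 - l3) * R3 = 1" "R3 * (p *\<^sub>R 1 - l3) = 1"
    and lL_def: "lL = x1 *\<^sub>R l1 + x2 *\<^sub>R l2 + x3 *\<^sub>R l3"
    and eE_def: "eE = x1 *\<^sub>R (l2 * l3) + x2 *\<^sub>R (l1 * l3) + x3 *\<^sub>R (l1 * l2)"
  defines "C \<equiv> p^2 *\<^sub>R 1 - p *\<^sub>R (l1 + l2 + l3 - lL) + eE"
    and "B \<equiv> p *\<^sub>R (x1 *\<^sub>R (l1 * l1) + x2 *\<^sub>R (l2 * l2) + x3 *\<^sub>R (l3 * l3) - lL * lL)
              + l1 * l2 * l3 - lL * eE"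
  assumes Ci: "C * Ci = 1" "Ci * C = 1"
  shows "(p *\<^sub>R 1 - (lL + B * Ci)) * (x1 *\<^sub>R R1 + x2 *\<^sub>R R2 + x3 *\<^sub>R R3) = 1"
    and "(x1 *\<^sub>R R1 + x2 *\<^sub>R R2 + x3 *\<^sub>R R3) * (p *\<^sub>R 1 - (lL + B * Ci)) = 1"
proof -
  define q1 where "q1 = p *\<^sub>R 1 - l1"
  define q2 where "q2 = p *\<^sub>R 1 - l2"
  define q3 where "q3 = p *\<^sub>R 1 - l3"
  define D where "D = q1 * q2 * q3"
  define Di where "Di = R3 * R2 * R1"
  define Ah where "Ah = x1 *\<^sub>R R1 + x2 *\<^sub>R R2 + x3 *\<^sub>R R3"
  note R = R1[folded q1_def] R2[folded q2_def] R3[folded q3_def]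
  have q_comm: "q1 * q2 = q2 * q1" "q1 * q3 = q3 * q1" "q2 * q3 = q3 * q2"
    unfolding q1_def q2_def q3_def by (simp_all add: algebra_simps c)
  have R_comm: "q1 * R2 = R2 * q1" "q1 * R3 = R3 * q1" "q2 * R3 = R3 * q2"
    using commute_inverse[OF q_comm(1) R(3,4)] commute_inverse[OF q_comm(2) R(5,6)]
      commute_inverse[OF q_comm(3) R(5,6)] by simp_all
  have D_Di: "D * Di = 1"
  proof -
    have "D * Di = q1 * (q2 * (q3 * R3) * R2) * R1" by (simp add: D_def Di_def mult.assoc)
    then show ?thesis using R by simp
  qed
  have Ah_D: "Ah * D = C"
  proof -
    have R1_D: "R1 * D = q2 * q3" using R(2) by (simp add: D_def flip: mult.assoc)
    have R2_D: "R2 * D = q1 * q3"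
    proof -
      have "R2 * D = q1 * (R2 * q2) * q3" by (simp add: D_def R_comm(1) flip: mult.assoc)
      then show ?thesis using R(4) by simp
    qed
    have R3_D: "R3 * D = q1 * q2"
    proof -
      have "R3 * D = (R3 * q1) * q2 * q3" by (simp add: D_def mult.assoc)
      also have "\<dots> = q1 * ((R3 * q2) * q3)" by (metis R_comm(2) mult.assoc)
      also have "\<dots> = q1 * q2 * (R3 * q3)" by (metis R_comm(3) mult.assoc)
      finally show ?thesis using R(6) by simp
    qed
    have "Ah * D = x1 *\<^sub>R (q2 * q3) + x2 *\<^sub>R (q1 * q3) + x3 *\<^sub>R (q1 * q2)"
      by (simp add: Ah_def algebra_simps R1_D R2_D R3_D)
    also have "\<dots> = C"
      using denominator_factorisation[OF x, of p l1 l2 l3]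
      by (simp add: C_def lL_def eE_def q1_def q2_def q3_def)
    finally show ?thesis .
  qed
  have Z_eq: "p *\<^sub>R 1 - (lL + B * Ci) = D * Ci"
  proof -
    have "D * Ci = ((p *\<^sub>R 1 - lL) * C - B) * Ci"
      using numerator_identity[OF c x, of p]
      by (simp add: D_def q1_def q2_def q3_def C_def B_def lL_def eE_def)
    also have "\<dots> = (p *\<^sub>R 1 - lL) * (C * Ci) - B * Ci" by (simp add: algebra_simps)
    finally show ?thesis using Ci by simp
  qed
  have Ah_eq: "Ah = C * Di" by (metis Ah_D D_Di mult.assoc mult.right_neutral)
  show "(p *\<^sub>R 1 - (lL + B * Ci)) * Ah = 1"
    using Ci D_Di by (simp add: Z_eq Ah_eq mult.assoc) (simp flip: mult.assoc)
  show "Ah * (p *\<^sub>R 1 - (lL + B * Ci)) = 1"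
    using Ci by (simp add: Z_eq Ah_D flip: mult.assoc)
qed

lemma laplace_transform_mixture:
  fixes l1 l2 l3 lL eE :: "'a::euclidean_space endo"
  assumes c: "l1 * l2 = l2 * l1" "l1 * l3 = l3 * l1" "l2 * l3 = l3 * l2"
    and x: "x1 + x2 + x3 = 1"
    and lL_def: "lL = x1 *\<^sub>R l1 + x2 *\<^sub>R l2 + x3 *\<^sub>R l3"
    and eE_def: "eE = x1 *\<^sub>R (l2 * l3) + x2 *\<^sub>R (l1 * l3) + x3 *\<^sub>R (l1 * l2)"
    and p: "p > norm l1" "p > norm l2" "p > norm l3" "p > 1"
      "p > norm (l1 + l2 + l3 - lL) + norm eE"
  defines "C \<equiv> p^2 *\<^sub>R 1 - p *\<^sub>R (l1 + l2 + l3 - lL) + eE"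
    and "B \<equiv> p *\<^sub>R (x1 *\<^sub>R (l1 * l1) + x2 *\<^sub>R (l2 * l2) + x3 *\<^sub>R (l3 * l3) - lL * lL)
              + l1 * l2 * l3 - lL * eE"
  shows "\<exists>Ci Ah. C * Ci = 1 \<and> Ci * C = 1
    \<and> (p *\<^sub>R 1 - (lL + B * Ci)) * Ah = 1 \<and> Ah * (p *\<^sub>R 1 - (lL + B * Ci)) = 1
    \<and> ((\<lambda>t. exp (- p * t) *\<^sub>R (x1 *\<^sub>R fromE (exp (t *\<^sub>R l1)) + x2 *\<^sub>R fromE (exp (t *\<^sub>R l2))
          + x3 *\<^sub>R fromE (exp (t *\<^sub>R l3)))) has_integral fromE Ah) {0..}"
proof -
  obtain R1 where R1: "((\<lambda>t. exp (- p * t) *\<^sub>R fromE (exp (t *\<^sub>R l1))) has_integral fromE R1) {0..}"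
      "(p *\<^sub>R 1 - l1) * R1 = 1" "R1 * (p *\<^sub>R 1 - l1) = 1"
    using laplace_transform_exp[OF p(1)] by blast
  obtain R2 where R2: "((\<lambda>t. exp (- p * t) *\<^sub>R fromE (exp (t *\<^sub>R l2))) has_integral fromE R2) {0..}"
      "(p *\<^sub>R 1 - l2) * R2 = 1" "R2 * (p *\<^sub>R 1 - l2) = 1"
    using laplace_transform_exp[OF p(2)] by blast
  obtain R3 where R3: "((\<lambda>t. exp (- p * t) *\<^sub>R fromE (exp (t *\<^sub>R l3))) has_integral fromE R3) {0..}"
      "(p *\<^sub>R 1 - l3) * R3 = 1" "R3 * (p *\<^sub>R 1 - l3) = 1"
    using laplace_transform_exp[OF p(3)] by blast
  obtain Ci where Ci: "C * Ci = 1" "Ci * C = 1"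
    using quadratic_pencil_invertible[OF p(4,5)] unfolding C_def by blast
  define Ah where "Ah = x1 *\<^sub>R R1 + x2 *\<^sub>R R2 + x3 *\<^sub>R R3"
  have "((\<lambda>t. x1 *\<^sub>R (exp (- p * t) *\<^sub>R fromE (exp (t *\<^sub>R l1)))
           + x2 *\<^sub>R (exp (- p * t) *\<^sub>R fromE (exp (t *\<^sub>R l2)))
           + x3 *\<^sub>R (exp (- p * t) *\<^sub>R fromE (exp (t *\<^sub>R l3)))) has_integral fromE Ah) {0..}"
    unfolding Ah_def fromE_add fromE_scaleR
    by (intro has_integral_add has_integral_cmul R1(1) R2(1) R3(1))
  then have "((\<lambda>t. exp (- p * t) *\<^sub>R (x1 *\<^sub>R fromE (exp (t *\<^sub>R l1))
      + x2 *\<^sub>R fromE (exp (t *\<^sub>R l2)) + x3 *\<^sub>R fromE (exp (t *\<^sub>R l3)))) has_integral fromE Ah) {0..}"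
    by (simp add: scaleR_add_right mult.commute)
  moreover note mixture_of_resolvents_inverse[OF c x R1(2,3) R2(2,3) R3(2,3) lL_def eE_def,
      of Ci, folded C_def B_def, OF Ci]
  ultimately show ?thesis
    using Ci unfolding Ah_def by blast
qed

lemma memory_kernel_laplace_transform:
  fixes l1 l2 l3 lL eE :: "(complex^'d::finite^'d) endo"
  assumes c: "l1 * l2 = l2 * l1" "l1 * l3 = l3 * l1" "l2 * l3 = l3 * l2"
    and x: "x1 + x2 + x3 = 1"
    and lL_def: "lL = x1 *\<^sub>R l1 + x2 *\<^sub>R l2 + x3 *\<^sub>R l3"
    and eE_def: "eE = x1 *\<^sub>R (l2 * l3) + x2 *\<^sub>R (l1 * l3) + x3 *\<^sub>R (l1 * l2)"
    and p: "p > norm l1" "p > norm l2" "p > norm l3" "p > 1"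
      "p > norm (l1 + l2 + l3 - lL) + norm eE"
  defines "C \<equiv> p^2 *\<^sub>R 1 - p *\<^sub>R (l1 + l2 + l3 - lL) + eE"
    and "B \<equiv> p *\<^sub>R (x1 *\<^sub>R (l1 * l1) + x2 *\<^sub>R (l2 * l2) + x3 *\<^sub>R (l3 * l3) - lL * lL)
              + l1 * l2 * l3 - lL * eE"
  defines "Z \<equiv> p *\<^sub>R id_blinfun - (fromE lL + (fromE B o\<^sub>L op_inv (fromE C)))"
  shows "op_invertible (fromE C) \<and> op_invertible Z
    \<and> ((\<lambda>t. exp (- p * t) *\<^sub>R (x1 *\<^sub>R fromE (exp (t *\<^sub>R l1)) + x2 *\<^sub>R fromE (exp (t *\<^sub>R l2))
          + x3 *\<^sub>R fromE (exp (t *\<^sub>R l3)))) has_integral op_inv Z) {0..}"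
proof -
  obtain Ci Ah where Ci: "C * Ci = 1" "Ci * C = 1"
    and Ah: "(p *\<^sub>R 1 - (lL + B * Ci)) * Ah = 1" "Ah * (p *\<^sub>R 1 - (lL + B * Ci)) = 1"
    and laplace: "((\<lambda>t. exp (- p * t) *\<^sub>R (x1 *\<^sub>R fromE (exp (t *\<^sub>R l1))
          + x2 *\<^sub>R fromE (exp (t *\<^sub>R l2)) + x3 *\<^sub>R fromE (exp (t *\<^sub>R l3)))) has_integral fromE Ah) {0..}"
    using laplace_transform_mixture[OF c x lL_def eE_def p, folded C_def B_def] by blast
  have "Z = fromE (p *\<^sub>R 1 - (lL + B * Ci))"
    by (simp add: Z_def op_inv_fromE[OF Ci] fromE_hom)
  then show ?thesis
    using op_invertible_fromE[OF Ci] op_invertible_fromE[OF Ah] op_inv_fromE[OF Ah] laplace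
    by simp
qed

theorem mainTheorem6:
  fixes L1 L2 L3 :: "'d::finite sop" and x1 x2 x3 :: real
    and A :: "real \<Rightarrow> 'd sop" and L :: "'d sop"
    and B C Lhat :: "real \<Rightarrow> 'd sop"
  assumes gen: "cpu_generator L1" "cpu_generator L2" "cpu_generator L3"
    and comm: "L1 o\<^sub>L L2 = L2 o\<^sub>L L1" "L1 o\<^sub>L L3 = L3 o\<^sub>L L1" "L2 o\<^sub>L L3 = L3 o\<^sub>L L2"
    and x: "x1 \<ge> 0" "x2 \<ge> 0" "x3 \<ge> 0" "x1 + x2 + x3 = 1"
    and A_def: "A = (\<lambda>t. x1 *\<^sub>R op_exp (t *\<^sub>R L1) + x2 *\<^sub>R op_exp (t *\<^sub>R L2)
                        + x3 *\<^sub>R op_exp (t *\<^sub>R L3))"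
    and L_def: "L = x1 *\<^sub>R L1 + x2 *\<^sub>R L2 + x3 *\<^sub>R L3"
    and B_def: "B = (\<lambda>p. p *\<^sub>R (x1 *\<^sub>R (L1 o\<^sub>L L1) + x2 *\<^sub>R (L2 o\<^sub>L L2) + x3 *\<^sub>R (L3 o\<^sub>L L3)
                              - (L o\<^sub>L L))
                 + (L1 o\<^sub>L L2 o\<^sub>L L3)
                 - (L o\<^sub>L (x1 *\<^sub>R (L2 o\<^sub>L L3) + x2 *\<^sub>R (L1 o\<^sub>L L3) + x3 *\<^sub>R (L1 o\<^sub>L L2))))"
    and C_def: "C = (\<lambda>p. (p ^ 2) *\<^sub>R id_blinfun - p *\<^sub>R (L1 + L2 + L3 - L)
                 + x1 *\<^sub>R (L2 o\<^sub>L L3) + x2 *\<^sub>R (L1 o\<^sub>L L3) + x3 *\<^sub>R (L1 o\<^sub>L L2))"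
    and Lhat_def: "Lhat = (\<lambda>p. L + (B p o\<^sub>L op_inv (C p)))"
  shows "A 0 = id_blinfun \<and>
         (\<exists>p0. \<forall>p > p0. op_invertible (C p) \<and> op_invertible (p *\<^sub>R id_blinfun - Lhat p) \<and>
            ((\<lambda>t. exp (- p * t) *\<^sub>R A t) has_integral op_inv (p *\<^sub>R id_blinfun - Lhat p)) {0..})"
proof -
  define l1 l2 l3 where "l1 = toE L1" and "l2 = toE L2" and "l3 = toE L3"
  define lL where "lL = x1 *\<^sub>R l1 + x2 *\<^sub>R l2 + x3 *\<^sub>R l3"
  define eE where "eE = x1 *\<^sub>R (l2 * l3) + x2 *\<^sub>R (l1 * l3) + x3 *\<^sub>R (l1 * l2)"
  have Lj: "L1 = fromE l1" "L2 = fromE l2" "L3 = fromE l3"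
    by (simp_all add: l1_def l2_def l3_def)
  have c: "l1 * l2 = l2 * l1" "l1 * l3 = l3 * l1" "l2 * l3 = l3 * l2"
    using comm by (simp_all add: Lj flip: fromE_mult fromE_inj)
  have L_eq: "L = fromE lL" by (simp add: L_def lL_def Lj fromE_hom)
  have A_eq: "A t = x1 *\<^sub>R fromE (exp (t *\<^sub>R l1)) + x2 *\<^sub>R fromE (exp (t *\<^sub>R l2))
      + x3 *\<^sub>R fromE (exp (t *\<^sub>R l3))" for t
    by (simp add: A_def Lj op_exp_eq flip: fromE_scaleR)
  have "A 0 = (x1 + x2 + x3) *\<^sub>R id_blinfun"
    by (simp add: A_eq fromE_one scaleR_add_left)
  moreover have "\<exists>p0. \<forall>p > p0. op_invertible (C p) \<and> op_invertible (p *\<^sub>R id_blinfun - Lhat p) \<and>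
            ((\<lambda>t. exp (- p * t) *\<^sub>R A t) has_integral op_inv (p *\<^sub>R id_blinfun - Lhat p)) {0..}"
  proof (intro exI allI impI)
    fix p
    assume "p > 1 + norm l1 + norm l2 + norm l3 + norm (l1 + l2 + l3 - lL) + norm eE"
    then have "p > norm l1" "p > norm l2" "p > norm l3" "p > 1"
      "p > norm (l1 + l2 + l3 - lL) + norm eE"
      by (smt (verit) norm_ge_zero)+
    moreover have "C p = fromE (p^2 *\<^sub>R 1 - p *\<^sub>R (l1 + l2 + l3 - lL) + eE)"
      by (simp add: C_def L_eq Lj eE_def fromE_hom)
    moreover have "B p = fromE (p *\<^sub>R (x1 *\<^sub>R (l1 * l1) + x2 *\<^sub>R (l2 * l2) + x3 *\<^sub>R (l3 * l3) - lL * lL)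
        + l1 * l2 * l3 - lL * eE)"
      by (simp add: B_def L_eq Lj eE_def fromE_hom)
    ultimately show "op_invertible (C p) \<and> op_invertible (p *\<^sub>R id_blinfun - Lhat p) \<and>
            ((\<lambda>t. exp (- p * t) *\<^sub>R A t) has_integral op_inv (p *\<^sub>R id_blinfun - Lhat p)) {0..}"
      using memory_kernel_laplace_transform[OF c x(4) lL_def eE_def]
      by (simp add: A_eq Lhat_def L_eq)
  qed
  ultimately show ?thesis using x(4) by simp
qed

end
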